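(* Let $a_c>b_c>0$, $k_e>0$, $a_e^2=a_c^2+k_e$, $b_e^2=b_c^2+k_e$, let $c$ be the ellipse $x^2/a_c^2+y^2/b_c^2=1$, $e$ the confocal ellipse $x^2/a_e^2+y^2/b_e^2=1$, and $O$ the origin. Let $P_1P_2$ be a chord of $e$ whose line $\ell=[P_1,P_2]$ is tangent to $c$ at the point $Q_1$, and let $R_1$ be the pole of $\ell$ with respect to $e$. Then the signed distances of $O$ and of $R_1$ from the line $\ell$ (measured with respect to one and the same unit normal of $\ell$) have product $-k_e$. Moreover, the lines $[P_1,P_2]$ and $[Q_1,R_1]$ are orthogonal. *)

theory Defs
  imports "HOL-Analysis.Analysis"
begin

definition on_ellipse :: "real \<Rightarrow> real \<Rightarrow> real \<times> real \<Rightarrow> bool" where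
  "on_ellipse a b p \<longleftrightarrow> (fst p)\<^sup>2 / a\<^sup>2 + (snd p)\<^sup>2 / b\<^sup>2 = 1"

definition line_through :: "real \<times> real \<Rightarrow> real \<times> real \<Rightarrow> (real \<times> real) set" where
  "line_through P1 P2 = {P1 + t *\<^sub>R (P2 - P1) | t. True}"

text \<open>Polar line of a point R with respect to the ellipse x^2/a^2+y^2/b^2=1.
  For R on the ellipse this is the tangent line at R.\<close>
definition polar_line :: "real \<Rightarrow> real \<Rightarrow> real \<times> real \<Rightarrow> (real \<times> real) set" where
  "polar_line a b R = {X. fst X * fst R / a\<^sup>2 + snd X * snd R / b\<^sup>2 = 1}"

definition tangent_at :: "real \<Rightarrow> real \<Rightarrow> (real \<times> real) set \<Rightarrow> real \<times> real \<Rightarrow> bool" where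
  "tangent_at a b L Q \<longleftrightarrow> on_ellipse a b Q \<and> L = polar_line a b Q"

definition is_pole :: "real \<Rightarrow> real \<Rightarrow> (real \<times> real) set \<Rightarrow> real \<times> real \<Rightarrow> bool" where
  "is_pole a b L R \<longleftrightarrow> polar_line a b R = L"

end

theory Submission
  imports Defs
begin

text \<open>The tangent to \<open>c\<close> at \<open>Q\<close> is the line \<open>u \<bullet> X = 1\<close> with
  \<open>u = (x\<^sub>Q / a\<^sub>c\<^sup>2, y\<^sub>Q / b\<^sub>c\<^sup>2)\<close>, and its pole with respect to the confocal ellipse
  \<open>e\<close> is \<open>R = (a\<^sub>e\<^sup>2 u\<^sub>1, b\<^sub>e\<^sup>2 u\<^sub>2) = Q + k\<^sub>e u\<close>. So \<open>R - Q\<close> is normal to the line,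
  and a unit normal of the line written as \<open>n \<bullet> X = d\<close> must be \<open>n = d u\<close>; then
  \<open>u \<bullet> Q = 1\<close> and \<open>d\<^sup>2 |u|\<^sup>2 = 1\<close> give the product \<open>-d \<cdot> d k\<^sub>e |u|\<^sup>2 = -k\<^sub>e\<close> of the
  signed distances. The chord endpoints matter only as two points spanning the line.\<close>

lemma hyperplane_normal_unique:
  fixes u v :: "'a::real_inner"
  assumes "u \<noteq> 0" and "{x. u \<bullet> x = 1} = {x. v \<bullet> x = d}"
  shows "v = d *\<^sub>R u"
proof -
  define x0 where "x0 = (1 / (u \<bullet> u)) *\<^sub>R u"
  define w where "w = v - (v \<bullet> x0) *\<^sub>R u"
  have "u \<bullet> x0 = 1" using assms(1) by (simp add: x0_def)
  then have v_x0: "v \<bullet> x0 = d" using assms(2) by blast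
  have u_w: "u \<bullet> w = 0" using assms(1) by (simp add: w_def x0_def inner_diff_right inner_commute)
  then have "u \<bullet> (x0 + w) = 1" using \<open>u \<bullet> x0 = 1\<close> by (simp add: inner_add_right)
  then have "v \<bullet> (x0 + w) = d" using assms(2) by blast
  then have "v \<bullet> w = 0" using v_x0 by (simp add: inner_add_right)
  then have "w \<bullet> w = 0" using u_w by (simp add: w_def inner_diff_left inner_commute)
  then show ?thesis using v_x0 by (simp add: w_def)
qed

lemma signed_distances_product:
  fixes u n Q :: "'a::real_inner"
  assumes "u \<noteq> 0" and "u \<bullet> Q = 1" and "norm n = 1"
    and "{x. u \<bullet> x = 1} = {x. n \<bullet> x = d}"
  shows "(n \<bullet> 0 - d) * (n \<bullet> (Q + k *\<^sub>R u) - d) = - k"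
proof -
  have n: "n = d *\<^sub>R u" using hyperplane_normal_unique assms(1,4) by blast
  have "n \<bullet> n = 1" using assms(3) norm_eq_1 by blast
  then have "d\<^sup>2 * (u \<bullet> u) = 1" by (simp add: n power2_eq_square)
  moreover have "n \<bullet> (Q + k *\<^sub>R u) - d = d * k * (u \<bullet> u)"
    using assms(2) by (simp add: n inner_add_right)
  ultimately show ?thesis by (simp add: power2_eq_square algebra_simps)
qed

definition polar_normal :: "real \<Rightarrow> real \<Rightarrow> real \<times> real \<Rightarrow> real \<times> real" where
  "polar_normal a b R = (fst R / a\<^sup>2, snd R / b\<^sup>2)"

lemma polar_line_eq_hyperplane: "polar_line a b R = {X. polar_normal a b R \<bullet> X = 1}"
  by (auto simp: polar_line_def polar_normal_def inner_prod_def mult.commute)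

lemma on_ellipse_iff_inner_polar_normal: "on_ellipse a b Q \<longleftrightarrow> polar_normal a b Q \<bullet> Q = 1"
  by (simp add: on_ellipse_def polar_normal_def inner_prod_def power2_eq_square)

lemma polar_normal_nonzero: "on_ellipse a b Q \<Longrightarrow> polar_normal a b Q \<noteq> 0"
  by (auto simp: on_ellipse_iff_inner_polar_normal)

lemma confocal_pole_of_tangent:
  assumes "a \<noteq> 0" and "b \<noteq> 0" and "a' \<noteq> 0" and "b' \<noteq> 0"
    and "a'\<^sup>2 = a\<^sup>2 + k" and "b'\<^sup>2 = b\<^sup>2 + k"
    and "on_ellipse a b Q" and "is_pole a' b' (polar_line a b Q) R"
  shows "R = Q + k *\<^sub>R polar_normal a b Q"
proof -
  have "polar_normal a' b' R = polar_normal a b Q"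
    using hyperplane_normal_unique[of "polar_normal a b Q" "polar_normal a' b' R" 1]
      polar_normal_nonzero[OF assms(7)] assms(8)
    by (simp add: is_pole_def polar_line_eq_hyperplane)
  then have "fst R / a'\<^sup>2 = fst Q / a\<^sup>2" and "snd R / b'\<^sup>2 = snd Q / b\<^sup>2"
    by (simp_all add: polar_normal_def)
  then have "fst R = fst Q * a'\<^sup>2 / a\<^sup>2" and "snd R = snd Q * b'\<^sup>2 / b\<^sup>2"
    using assms(1-4) by (simp_all add: field_simps)
  then show ?thesis
    using assms(1,2,5,6) by (simp add: polar_normal_def prod_eq_iff field_simps)
qed

lemma endpoints_in_line_through: "p \<in> line_through p q" "q \<in> line_through p q"
  unfolding line_through_def by (auto intro!: exI[of _ 0] exI[of _ 1])

theorem lemma2p4: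
  fixes a_c b_c k_e a_e b_e :: real and P1 P2 Q1 R1 :: "real \<times> real"
  assumes "a_c > b_c" and "b_c > 0" and "k_e > 0"
    and "a_e > 0" and "b_e > 0"
    and "a_e\<^sup>2 = a_c\<^sup>2 + k_e" and "b_e\<^sup>2 = b_c\<^sup>2 + k_e"
    and "P1 \<noteq> P2" and "on_ellipse a_e b_e P1" and "on_ellipse a_e b_e P2"
    and "tangent_at a_c b_c (line_through P1 P2) Q1"
    and "is_pole a_e b_e (line_through P1 P2) R1"
  shows "(\<forall>n d. norm n = 1 \<and> line_through P1 P2 = {X. n \<bullet> X = d} \<longrightarrow>
            (n \<bullet> (0, 0) - d) * (n \<bullet> R1 - d) = - k_e)
       \<and> Q1 \<noteq> R1 \<and> (P2 - P1) \<bullet> (R1 - Q1) = 0"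
proof -
  define u where "u = polar_normal a_c b_c Q1"
  have Q1: "on_ellipse a_c b_c Q1" and line: "line_through P1 P2 = {X. u \<bullet> X = 1}"
    using assms(11) by (simp_all add: tangent_at_def u_def polar_line_eq_hyperplane)
  have "u \<noteq> 0" and "u \<bullet> Q1 = 1"
    using Q1 by (simp_all add: u_def polar_normal_nonzero on_ellipse_iff_inner_polar_normal)
  have R1: "R1 = Q1 + k_e *\<^sub>R u"
    using confocal_pole_of_tangent[of a_c b_c a_e b_e k_e Q1 R1] assms(1-7,11,12)
    by (simp add: tangent_at_def u_def)
  have P1_P2: "u \<bullet> P1 = 1" "u \<bullet> P2 = 1"
    using endpoints_in_line_through line by blast+
  have "(n \<bullet> (0, 0) - d) * (n \<bullet> R1 - d) = - k_e"
    if "norm n = 1" and "line_through P1 P2 = {X. n \<bullet> X = d}" for n d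
    using signed_distances_product[OF \<open>u \<noteq> 0\<close> \<open>u \<bullet> Q1 = 1\<close>] that line R1
    by (simp add: zero_prod_def)
  moreover have "Q1 \<noteq> R1"
    using R1 \<open>u \<noteq> 0\<close> assms(3) by simp
  moreover have "(P2 - P1) \<bullet> (R1 - Q1) = 0"
    using P1_P2
    by (simp add: R1 inner_diff_left inner_commute[of P1] inner_commute[of P2])
  ultimately show ?thesis by blast
qed

end
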